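(* Let $X$ be a Baire space, $Y$ a topological space, $(Z,d)$ a metric space and $f:X\times Y\to Z$ a mapping. Let $b\in Y$ have a countable neighborhood base in $Y$. Suppose $f^y$ is quasicontinuous for every $y\in Y$, and $f_x$ is continuous at $b$ for every $x$ in a given dense Baire subspace $Q$ of $X$. Then: (1) $f$ is quasicontinuous with respect to the variable $y$ at each point of $X\times\{b\}$; (2) the set of all $x\in X$ such that $f$ is continuous at $(x,b)$ is residual in $X$.
   Context: $f_x(y)=f^y(x)=f(x,y)$. A mapping $g:X\to Z$ is quasicontinuous at $a$ if for each neighborhood $U$ of $a$ and neighborhood $W$ of $g(a)$ there is an open $O$ with $\emptyset\ne O\subset U$ and $g(O)\subset W$; quasicontinuous means at every point. $f$ is quasicontinuous with respect to the variable $y$ at $(a,b)$ if for each neighborhood $U$ of $a$ in $X$ and each $\varepsilon>0$ there are a neighborhood $V$ of $b$ in $Y$ and an open $O\subset X$ with $\emptyset\ne O\subset U$ such that $d(f(a,b),f(x,y))\le\varepsilon$ for all $x\in O$, $y\in V$. Residual means containing a countable intersection of dense open sets. *)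

theory Defs
  imports "HOL-Analysis.Analysis"
begin

definition dense_in :: "'a topology \<Rightarrow> 'a set \<Rightarrow> bool" where
  "dense_in T S \<longleftrightarrow> S \<subseteq> topspace T \<and> T closure_of S = topspace T"

definition baire_space :: "'a topology \<Rightarrow> bool" where
  "baire_space T \<longleftrightarrow>
     (\<forall>G :: nat \<Rightarrow> 'a set. (\<forall>n. openin T (G n) \<and> dense_in T (G n))
        \<longrightarrow> dense_in T (\<Inter>n. G n))"

definition residual :: "'a::topological_space set \<Rightarrow> bool" where
  "residual S \<longleftrightarrow>
     (\<exists>G :: nat \<Rightarrow> 'a set. (\<forall>n. open (G n) \<and> closure (G n) = UNIV) \<and> (\<Inter>n. G n) \<subseteq> S)"

definition quasicont_at :: "('a::topological_space \<Rightarrow> 'b::topological_space) \<Rightarrow> 'a \<Rightarrow> bool" where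
  "quasicont_at g a \<longleftrightarrow>
     (\<forall>U W. open U \<and> a \<in> U \<and> open W \<and> g a \<in> W \<longrightarrow>
        (\<exists>Ob. open Ob \<and> Ob \<noteq> {} \<and> Ob \<subseteq> U \<and> g ` Ob \<subseteq> W))"

definition quasicont :: "('a::topological_space \<Rightarrow> 'b::topological_space) \<Rightarrow> bool" where
  "quasicont g \<longleftrightarrow> (\<forall>a. quasicont_at g a)"

definition quasicont_wrt_y_at ::
  "('a::topological_space \<times> 'b::topological_space \<Rightarrow> 'c::metric_space) \<Rightarrow> 'a \<Rightarrow> 'b \<Rightarrow> bool" where
  "quasicont_wrt_y_at f a b \<longleftrightarrow>
     (\<forall>U. open U \<and> a \<in> U \<longrightarrow> (\<forall>\<epsilon>>0. \<exists>V Ob. open V \<and> b \<in> V \<and> open Ob \<and> Ob \<noteq> {} \<and> Ob \<subseteq> U \<and>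
        (\<forall>x\<in>Ob. \<forall>y\<in>V. dist (f (a, b)) (f (x, y)) \<le> \<epsilon>)))"

definition countable_nhds_base_at :: "'a::topological_space \<Rightarrow> bool" where
  "countable_nhds_base_at b \<longleftrightarrow>
     (\<exists>\<B>. countable \<B> \<and> (\<forall>N\<in>\<B>. b \<in> interior N) \<and>
          (\<forall>W. open W \<and> b \<in> W \<longrightarrow> (\<exists>N\<in>\<B>. N \<subseteq> W)))"

end

theory Submission
  imports Defs
begin

(* Part (1).  Fix a, a neighbourhood U of a and e > 0.  Quasicontinuity of f^b gives a
   nonempty open O \<subseteq> U on which f(x,b) is e/2-close to f(a,b).  Using a countable base
   N_0, N_1, ... at b, the points of Q \<inter> O are covered by the countably many sets
   A_n = {x \<in> Q \<inter> O. f(x,y) is e/2-close to f(x,b) for all y \<in> N_n}, since each f_x (x \<in> Q)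
   is continuous at b.  As Q is a dense Baire subspace, some A_n is dense in a nonempty open
   G \<subseteq> O.  On A_n \<times> N_n the map f is e-close to f(a,b), and quasicontinuity of each f^y
   spreads this bound from A_n to all of G; so G and interior N_n are the required sets.

   Part (2).  If f is quasicontinuous w.r.t. y at every point of X \<times> {b}, then for every
   r > 0 the union of the open sets O admitting a neighbourhood V of b with oscillation
   of f on O \<times> V at most r is open and dense, and f is continuous at (x,b) for every x
   in the intersection of these sets over r = 1/(k+1). *)

lemma open_meets_closure: "x \<in> closure X \<Longrightarrow> open S \<Longrightarrow> x \<in> S \<Longrightarrow> S \<inter> X \<noteq> {}"
  using open_Int_closure_eq_empty by blast

lemma open_meets_dense: "closure X = UNIV \<Longrightarrow> open S \<Longrightarrow> S \<noteq> {} \<Longrightarrow> S \<inter> X \<noteq> {}"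
  by (metis open_Int_closure_eq_empty inf_top.right_neutral)

lemma dense_Int_dense_open:
  assumes "closure Q = UNIV" "open T" "closure T = UNIV"
  shows "closure (Q \<inter> T) = UNIV"
proof -
  have "x \<in> closure (Q \<inter> T)" for x
  proof (subst closure_iff_nhds_not_empty, intro allI impI)
    fix A S assume "S \<subseteq> A" "open S" "x \<in> S"
    then have "S \<inter> T \<inter> Q \<noteq> {}"
      using assms open_meets_dense[of T S] open_meets_dense[of Q "S \<inter> T"] by blast
    then show "Q \<inter> T \<inter> A \<noteq> {}" using \<open>S \<subseteq> A\<close> by blast
  qed
  then show ?thesis by blast
qed

lemma dense_in_subtopology_iff:
  "dense_in (subtopology euclidean Q) H \<longleftrightarrow> H \<subseteq> Q \<and> Q \<subseteq> closure H"
  unfolding dense_in_def closure_of_subtopology by (auto simp: Int_absorb1)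

lemma dense_baire_subspace_Inter:
  assumes baire: "baire_space (subtopology euclidean Q)" and dense: "closure Q = UNIV"
    and T: "\<And>n::nat. open (T n)" "\<And>n. closure (T n) = UNIV"
  shows "closure (Q \<inter> (\<Inter>n. T n)) = UNIV"
proof -
  have "openin (subtopology euclidean Q) (Q \<inter> T n)" for n
    using T(1) unfolding openin_open by blast
  moreover have "dense_in (subtopology euclidean Q) (Q \<inter> T n)" for n
    using dense_Int_dense_open[OF dense T(1) T(2)] unfolding dense_in_subtopology_iff by blast
  ultimately have "dense_in (subtopology euclidean Q) (\<Inter>n. Q \<inter> T n)"
    using baire[unfolded baire_space_def, rule_format, of "\<lambda>n. Q \<inter> T n"] by blast
  moreover have "(\<Inter>n. Q \<inter> T n) = Q \<inter> (\<Inter>n. T n)" by auto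
  ultimately have "Q \<subseteq> closure (Q \<inter> (\<Inter>n. T n))"
    unfolding dense_in_subtopology_iff by simp
  then have "closure Q \<subseteq> closure (Q \<inter> (\<Inter>n. T n))"
    by (simp add: closure_minimal)
  then show ?thesis using dense by blast
qed

text \<open>Otherwise the complements of the sets closure (A n) \<inter> closure Ob are
  dense open, and a point of Q \<inter> Ob in all of them lies in no A n.\<close>
lemma baire_dense_piece:
  assumes baire: "baire_space (subtopology euclidean Q)" and dense: "closure Q = UNIV"
    and Ob: "open Ob" "Ob \<noteq> {}" and cover: "Q \<inter> Ob \<subseteq> (\<Union>n::nat. A n)"
  shows "\<exists>n G. open G \<and> G \<noteq> {} \<and> G \<subseteq> Ob \<and> G \<subseteq> closure (A n)"
proof (rule ccontr)
  assume none: "\<not> ?thesis"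
  define T where "T n = - (closure (A n) \<inter> closure Ob)" for n
  have open_T: "open (T n)" for n
    unfolding T_def by (intro open_Compl closed_Int closed_closure)
  have dense_T: "closure (T n) = UNIV" for n
  proof -
    have "S \<inter> T n \<noteq> {}" if "open S" "S \<noteq> {}" for S
    proof (cases "S \<inter> Ob = {}")
      case True
      then have "S \<inter> closure Ob = {}" using \<open>open S\<close> open_Int_closure_eq_empty by blast
      then show ?thesis using \<open>S \<noteq> {}\<close> unfolding T_def by blast
    next
      case False
      then have "\<not> S \<inter> Ob \<subseteq> closure (A n)" using none \<open>open S\<close> Ob(1) by blast
      then show ?thesis unfolding T_def by blast
    qed
    then have "x \<in> closure (T n)" for x
      unfolding closure_iff_nhds_not_empty by blast
    then show ?thesis by blast
  qed
  have "Ob \<inter> (Q \<inter> (\<Inter>n. T n)) \<noteq> {}"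
    using open_meets_dense[OF dense_baire_subspace_Inter[OF baire dense open_T dense_T] Ob] .
  then obtain q where q: "q \<in> Q" "q \<in> Ob" "\<And>n. q \<in> T n" by blast
  then obtain n where "q \<in> A n" using cover by blast
  then have "q \<in> closure (A n) \<inter> closure Ob" using q(2) closure_subset by blast
  then show False using q(3)[of n] unfolding T_def by blast
qed

lemma nhds_base_sequence:
  assumes "countable_nhds_base_at b"
  obtains N :: "nat \<Rightarrow> 'a::topological_space set"
  where "\<And>n. b \<in> interior (N n)" "\<And>W. open W \<Longrightarrow> b \<in> W \<Longrightarrow> \<exists>n. N n \<subseteq> W"
proof -
  obtain \<B> where \<B>: "countable \<B>" "\<And>M. M \<in> \<B> \<Longrightarrow> b \<in> interior M"
    "\<And>W. open W \<Longrightarrow> b \<in> W \<Longrightarrow> \<exists>M\<in>\<B>. M \<subseteq> W"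
    using assms unfolding countable_nhds_base_at_def by metis
  have "\<B> \<noteq> {}" using \<B>(3)[of UNIV] by auto
  show thesis
  proof
    show "b \<in> interior (from_nat_into \<B> n)" for n
      by (rule \<B>(2)[OF from_nat_into[OF \<open>\<B> \<noteq> {}\<close>]])
    show "\<exists>n. from_nat_into \<B> n \<subseteq> W" if W: "open W" "b \<in> W" for W
    proof -
      obtain M where "M \<in> \<B>" "M \<subseteq> W" using \<B>(3)[OF W] by blast
      moreover obtain n where "from_nat_into \<B> n = M" using from_nat_into_surj[OF \<B>(1) \<open>M \<in> \<B>\<close>] by blast
      ultimately show ?thesis by blast
    qed
  qed
qed

lemma continuous_at_base_bound:
  fixes g :: "'a::topological_space \<Rightarrow> 'b::metric_space"
  assumes base: "\<And>W. open W \<Longrightarrow> b \<in> W \<Longrightarrow> \<exists>n. N n \<subseteq> W"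
    and lim: "(g \<longlongrightarrow> g b) (at b)" and e: "e > 0"
  shows "\<exists>n. \<forall>y\<in>N n. dist (g y) (g b) \<le> e"
proof -
  have "eventually (\<lambda>y. dist (g y) (g b) < e) (at b)"
    using tendstoD[OF lim e] .
  then obtain W where W: "open W" "b \<in> W" "\<And>y. y \<in> W \<Longrightarrow> y \<noteq> b \<Longrightarrow> dist (g y) (g b) < e"
    unfolding eventually_at_topological by blast
  obtain n where "N n \<subseteq> W" using base W(1,2) by blast
  have "dist (g y) (g b) \<le> e" if "y \<in> N n" for y
  proof (cases "y = b")
    case False
    then show ?thesis using that \<open>N n \<subseteq> W\<close> W(3) by (simp add: less_imp_le subset_iff)
  qed (use e in simp)
  then show ?thesis by blast
qed

lemma quasicont_at_bound_closure:
  fixes g :: "'a::topological_space \<Rightarrow> 'b::metric_space"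
  assumes qc: "quasicont_at g x" and G: "open G" "x \<in> G" "G \<subseteq> closure S"
    and bound: "\<And>x'. x' \<in> S \<Longrightarrow> dist c (g x') \<le> r"
  shows "dist c (g x) \<le> r"
proof (rule ccontr)
  assume "\<not> dist c (g x) \<le> r"
  then have "g x \<in> - cball c r" by simp
  moreover have "open (- cball c r)" by (simp add: open_Compl)
  ultimately obtain Ob where Ob: "open Ob" "Ob \<noteq> {}" "Ob \<subseteq> G" "g ` Ob \<subseteq> - cball c r"
    using qc[unfolded quasicont_at_def, rule_format, of G "- cball c r"] G(1,2) by blast
  then obtain z where "z \<in> Ob" by blast
  then have "Ob \<inter> S \<noteq> {}" using open_meets_closure[of z S Ob] Ob(1,3) G(3) by blast
  then obtain x' where "x' \<in> Ob" "x' \<in> S" by blast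
  then show False using bound[of x'] Ob(4) by auto
qed

section \<open>Part (1): quasicontinuity with respect to y\<close>

lemma quasicont_wrt_y_at_dense_baire:
  fixes f :: "'a::topological_space \<times> 'b::topological_space \<Rightarrow> 'c::metric_space"
  assumes base: "countable_nhds_base_at b"
    and qc: "\<forall>y. quasicont (\<lambda>x. f (x, y))"
    and baire: "baire_space (subtopology euclidean Q)" and dense: "closure Q = UNIV"
    and cont: "\<forall>x\<in>Q. ((\<lambda>y. f (x, y)) \<longlongrightarrow> f (x, b)) (at b)"
  shows "quasicont_wrt_y_at f a b"
  unfolding quasicont_wrt_y_at_def
proof (intro allI impI)
  fix U and e :: real assume U: "open U \<and> a \<in> U" and e: "e > 0"
  obtain N :: "nat \<Rightarrow> 'b set"
    where N: "\<And>n. b \<in> interior (N n)" "\<And>W. open W \<Longrightarrow> b \<in> W \<Longrightarrow> \<exists>n. N n \<subseteq> W"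
    using nhds_base_sequence[OF base] by metis
  have qc_b: "quasicont_at (\<lambda>x. f (x, b)) a" using qc unfolding quasicont_def by blast
  have "f (a, b) \<in> ball (f (a, b)) (e/2)" using e by simp
  then obtain Ob where Ob: "open Ob" "Ob \<noteq> {}" "Ob \<subseteq> U"
      "(\<lambda>x. f (x, b)) ` Ob \<subseteq> ball (f (a, b)) (e/2)"
    using qc_b[unfolded quasicont_at_def, rule_format, of U "ball (f (a, b)) (e/2)"] U open_ball
    by blast
  define A where "A n = {x \<in> Q \<inter> Ob. \<forall>y\<in>N n. dist (f (x, y)) (f (x, b)) \<le> e/2}" for n
  have cover: "Q \<inter> Ob \<subseteq> (\<Union>n. A n)"
  proof
    fix q assume q: "q \<in> Q \<inter> Ob"
    have lim: "((\<lambda>y. f (q, y)) \<longlongrightarrow> f (q, b)) (at b)" using cont q by blast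
    obtain n where "\<forall>y\<in>N n. dist (f (q, y)) (f (q, b)) \<le> e/2"
      using continuous_at_base_bound[OF N(2) lim, of "e/2"] e by auto
    then show "q \<in> (\<Union>n. A n)" using q unfolding A_def by blast
  qed
  obtain n G where G: "open G" "G \<noteq> {}" "G \<subseteq> Ob" "G \<subseteq> closure (A n)"
    using baire_dense_piece[OF baire dense Ob(1,2) cover] by blast
  have close_on_A: "dist (f (a, b)) (f (x', y)) \<le> e" if "x' \<in> A n" "y \<in> N n" for x' y
  proof -
    have "dist (f (a, b)) (f (x', y)) \<le> dist (f (a, b)) (f (x', b)) + dist (f (x', y)) (f (x', b))"
      by (rule dist_triangle2)
    moreover have "x' \<in> Ob" using that unfolding A_def by blast
    then have "dist (f (a, b)) (f (x', b)) < e/2" using Ob(4) by auto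
    moreover have "dist (f (x', y)) (f (x', b)) \<le> e/2" using that unfolding A_def by blast
    ultimately show ?thesis by linarith
  qed
  have bound: "dist (f (a, b)) (f (x, y)) \<le> e" if "x \<in> G" "y \<in> interior (N n)" for x y
  proof (rule quasicont_at_bound_closure[OF _ G(1) \<open>x \<in> G\<close> G(4)])
    show "quasicont_at (\<lambda>x. f (x, y)) x" using qc unfolding quasicont_def by blast
    show "dist (f (a, b)) (f (x', y)) \<le> e" if "x' \<in> A n" for x'
      using close_on_A[OF that] \<open>y \<in> interior (N n)\<close> interior_subset by blast
  qed
  show "\<exists>V Ob. open V \<and> b \<in> V \<and> open Ob \<and> Ob \<noteq> {} \<and> Ob \<subseteq> U \<and>
      (\<forall>x\<in>Ob. \<forall>y\<in>V. dist (f (a, b)) (f (x, y)) \<le> e)"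
  proof (intro exI[of _ "interior (N n)"] exI[of _ G] conjI ballI)
    show "G \<subseteq> U" using G(3) Ob(3) by blast
  qed (use G(1,2) N(1) bound in auto)
qed

section \<open>Part (2): residuality of the points of continuity\<close>

definition small_oscillation_set ::
  "('a::topological_space \<times> 'b::topological_space \<Rightarrow> 'c::metric_space) \<Rightarrow> 'b \<Rightarrow> real \<Rightarrow> 'a set"
  where "small_oscillation_set f b r = \<Union>{Ob. open Ob \<and> (\<exists>V. open V \<and> b \<in> V \<and>
      (\<forall>p\<in>Ob \<times> V. \<forall>p'\<in>Ob \<times> V. dist (f p) (f p') \<le> r))}"

lemma open_small_oscillation_set: "open (small_oscillation_set f b r)"
  unfolding small_oscillation_set_def by auto

lemma dense_small_oscillation_set:
  assumes qc: "\<forall>a. quasicont_wrt_y_at f a b" and r: "r > 0"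
  shows "closure (small_oscillation_set f b r) = UNIV"
proof -
  have "S \<inter> small_oscillation_set f b r \<noteq> {}" if S: "open S" "z \<in> S" for S z
  proof -
    obtain V Ob where VO: "open V" "b \<in> V" "open Ob" "Ob \<noteq> {}" "Ob \<subseteq> S"
      "\<And>x y. x \<in> Ob \<Longrightarrow> y \<in> V \<Longrightarrow> dist (f (z, b)) (f (x, y)) \<le> r/2"
      using qc S r unfolding quasicont_wrt_y_at_def by (meson half_gt_zero)
    have "dist (f p) (f p') \<le> r" if "p \<in> Ob \<times> V" "p' \<in> Ob \<times> V" for p p'
    proof -
      have "dist (f p) (f p') \<le> dist (f (z, b)) (f p) + dist (f (z, b)) (f p')"
        by (rule dist_triangle3)
      moreover have "dist (f (z, b)) (f p) \<le> r/2" "dist (f (z, b)) (f p') \<le> r/2"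
        using that VO(6)[of "fst p" "snd p"] VO(6)[of "fst p'" "snd p'"] by (auto simp: mem_Times_iff)
      ultimately show ?thesis by linarith
    qed
    then have "Ob \<subseteq> small_oscillation_set f b r"
      unfolding small_oscillation_set_def using VO(1-3) by blast
    then show ?thesis using VO(4,5) by blast
  qed
  then have "z \<in> closure (small_oscillation_set f b r)" for z
    unfolding closure_iff_nhds_not_empty by blast
  then show ?thesis by blast
qed

lemma continuous_at_small_oscillation:
  assumes x: "\<And>k. x \<in> small_oscillation_set f b (1 / real (Suc k))"
  shows "(f \<longlongrightarrow> f (x, b)) (at (x, b))"
proof (rule tendstoI)
  fix e :: real assume "e > 0"
  then obtain k where k: "1 / real (Suc k) < e"
    using reals_Archimedean by (auto simp: inverse_eq_divide)
  obtain Ob V where OV: "open Ob" "x \<in> Ob" "open V" "b \<in> V"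
    "\<And>p p'. p \<in> Ob \<times> V \<Longrightarrow> p' \<in> Ob \<times> V \<Longrightarrow> dist (f p) (f p') \<le> 1 / real (Suc k)"
    using x[of k] unfolding small_oscillation_set_def by blast
  have "dist (f p) (f (x, b)) < e" if "p \<in> Ob \<times> V" for p
    using OV(5)[OF that, of "(x, b)"] OV(2,4) k by simp
  then show "eventually (\<lambda>p. dist (f p) (f (x, b)) < e) (at (x, b))"
    unfolding eventually_at_topological using OV(1-4) open_Times by (metis SigmaI)
qed

lemma residual_continuity_points:
  assumes "\<forall>a. quasicont_wrt_y_at f a b"
  shows "residual {x. (f \<longlongrightarrow> f (x, b)) (at (x, b))}"
  unfolding residual_def
proof (intro exI conjI allI)
  let ?G = "\<lambda>k. small_oscillation_set f b (1 / real (Suc k))"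
  show "open (?G k)" for k by (rule open_small_oscillation_set)
  show "closure (?G k) = UNIV" for k
    using dense_small_oscillation_set[OF assms] by simp
  show "(\<Inter>k. ?G k) \<subseteq> {x. (f \<longlongrightarrow> f (x, b)) (at (x, b))}"
    using continuous_at_small_oscillation by blast
qed

theorem theorem4p4:
  fixes f :: "'a::topological_space \<times> 'b::topological_space \<Rightarrow> 'c::metric_space"
    and b :: 'b and Q :: "'a set"
  assumes "baire_space (euclidean :: 'a topology)"
    and "countable_nhds_base_at b"
    and "\<forall>y. quasicont (\<lambda>x. f (x, y))"
    and "dense_in euclidean Q"
    and "baire_space (subtopology euclidean Q)"
    and "\<forall>x\<in>Q. ((\<lambda>y. f (x, y)) \<longlongrightarrow> f (x, b)) (at b)"
  shows "(\<forall>a. quasicont_wrt_y_at f a b) \<and> residual {x. (f \<longlongrightarrow> f (x, b)) (at (x, b))}"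
proof -
  have "closure Q = UNIV" using assms(4) unfolding dense_in_def by simp
  then have "\<forall>a. quasicont_wrt_y_at f a b"
    using quasicont_wrt_y_at_dense_baire[OF assms(2,3,5) _ assms(6)] by blast
  then show ?thesis using residual_continuity_points by blast
qed

end
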